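(* Let $N,M\ge 1$, let $\delta\in(0,1)$, $\eta>0$ and $\epsilon\ge 0$. Let $\mathbf x_\star\in\mathbb C^N$ with $\|\mathbf x_\star\|_2=1$, let $\mathbf a_1,\dots,\mathbf a_M\in\mathbb C^N$, and let $b_i=|\mathbf a_i^*\mathbf x_\star|^2+\xi_i$ for $1\le i\le M$, where $\xi_i\in[0,\eta^{-1}]$. Let $\mathbf a_0\in\mathbb C^N\setminus\{\mathbf 0\}$ be such that $\mathbf a_0^*\mathbf x_\star$ is a positive real number and $|\mathbf a_0^*\mathbf x_\star|\ge\delta\|\mathbf a_0\|_2\|\mathbf x_\star\|_2$. Define $$\mathcal R_\delta=\left\{\mathbf h\in\mathbb C^N:\ \big\|\mathbf h-(\mathbf x_\star^*\mathbf h)\mathbf x_\star\big\|_2\ge\delta\,\big|\mathrm{Im}(\mathbf x_\star^*\mathbf h)\big|\right\}.$$ Suppose that every $\mathbf h\in\mathcal R_\delta$ with $\|\mathbf h\|_2>\epsilon$ violates at least one of the inequalities $$\langle\mathbf a_0,\mathbf h\rangle\ge 0,\qquad \langle\mathbf a_i\mathbf a_i^*\mathbf x_\star,\mathbf h\rangle\le\tfrac12\eta^{-1}\quad(1\le i\le M).$$ Then every solution $\widehat{\mathbf x}$ of the convex program $$\max_{\mathbf x\in\mathbb C^N}\ \langle\mathbf a_0,\mathbf x\rangle\quad\text{subject to}\quad|\mathbf a_i^*\mathbf x|^2\le b_i,\ 1\le i\le M,$$ satisfies $\|\widehat{\mathbf x}-\mathbf x_\star\|_2\le\epsilon$.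
   Context: $\mathbb C^N$ is regarded as a $2N$-dimensional real inner-product space with inner product $\langle\mathbf x_1,\mathbf x_2\rangle=\mathrm{Re}(\mathbf x_1^*\mathbf x_2)$. $\mathbf x^*$ denotes the conjugate transpose. *)

theory Defs
  imports "HOL-Analysis.Analysis"
begin

text \<open>Vectors in C^N are modelled as complex ^ 'n with N = CARD('n).
  cdot x y is the Hermitian product x^* y.\<close>
definition cdot :: "complex ^ 'n \<Rightarrow> complex ^ 'n \<Rightarrow> complex" where
  "cdot x y = (\<Sum>k\<in>UNIV. cnj (x $ k) * y $ k)"

definition rinner :: "complex ^ 'n \<Rightarrow> complex ^ 'n \<Rightarrow> real" where
  "rinner x y = Re (cdot x y)"

definition R_delta :: "real \<Rightarrow> complex ^ 'n \<Rightarrow> (complex ^ 'n) set" where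
  "R_delta \<delta> xs = {h. norm (h - (\<chi> k. cdot xs h * xs $ k)) \<ge> \<delta> * \<bar>Im (cdot xs h)\<bar>}"

end

theory Submission
  imports Defs
begin

text \<open>Put \<open>h = xhat - xs\<close>. Since \<open>xs\<close> is feasible, optimality of \<open>xhat\<close> gives
  \<open><a0,h> \<ge> 0\<close>, and expanding \<open>|ai^*(xs + h)|^2 \<le> |ai^*xs|^2 + \<xi>i\<close> gives
  \<open><ai ai^* xs, h> \<le> \<xi>i/2 \<le> 1/(2\<eta>)\<close>. The feasible set is invariant under
  multiplication by unimodular scalars, so an optimum has \<open>a0^* xhat\<close> real, hence
  \<open>a0^* h\<close> is real. Then the imaginary part of \<open>xs^* h\<close> is controlled by
  the component of \<open>h\<close> orthogonal to \<open>xs\<close>, because \<open>a0^* xs\<close> is real and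
  \<open>|a0^* xs| \<ge> \<delta>\<parallel>a0\<parallel>\<close>; so \<open>h \<in> R_delta\<close>, and the hypothesis forces \<open>\<parallel>h\<parallel> \<le> \<epsilon>\<close>.\<close>

lemma cdot_diff_right: "cdot a (x - y) = cdot a x - cdot a y"
  unfolding cdot_def by (simp add: right_diff_distrib sum_subtractf)

lemma rinner_diff_right: "rinner a (x - y) = rinner a x - rinner a y"
  unfolding rinner_def by (simp add: cdot_diff_right)

lemma cdot_scale_right: "cdot a (\<chi> k. c * x $ k) = c * cdot a x"
  unfolding cdot_def by (simp add: sum_distrib_left algebra_simps)

lemma cdot_scale_left: "cdot (\<chi> k. c * x $ k) y = cnj c * cdot x y"
  unfolding cdot_def by (simp add: sum_distrib_left algebra_simps)

lemma norm_cdot_le: "cmod (cdot x y) \<le> norm x * norm y"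
proof -
  have "cmod (cdot x y) \<le> (\<Sum>k\<in>UNIV. \<bar>cmod (x $ k)\<bar> * \<bar>cmod (y $ k)\<bar>)"
    unfolding cdot_def using norm_sum [of "\<lambda>k. cnj (x $ k) * y $ k" UNIV]
    by (simp add: norm_mult)
  also have "\<dots> \<le> L2_set (\<lambda>k. cmod (x $ k)) UNIV * L2_set (\<lambda>k. cmod (y $ k)) UNIV"
    by (rule L2_set_mult_ineq)
  also have "\<dots> = norm x * norm y" by (simp add: norm_vec_def)
  finally show ?thesis .
qed

lemma cmod_add_power2: "(cmod (u + w))\<^sup>2 = (cmod u)\<^sup>2 + 2 * Re (cnj u * w) + (cmod w)\<^sup>2"
  unfolding cmod_power2 by (simp add: power2_eq_square algebra_simps)

lemma Im_eq_0_if_cmod_le_Re: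
  assumes "cmod w \<le> Re w"
  shows "Im w = 0"
proof -
  have "(cmod w)\<^sup>2 \<le> (Re w)\<^sup>2"
    using assms norm_ge_zero power_mono by blast
  then show ?thesis unfolding cmod_power2 by simp
qed

text \<open>The rotation \<open>c = cnj w / |w|\<close> with \<open>w = a0^* x\<close> turns the objective into \<open>|w|\<close>.\<close>
lemma Im_cdot_eq_0_if_phase_optimal:
  assumes "\<And>c. cmod c = 1 \<Longrightarrow> rinner a0 (\<chi> k. c * x $ k) \<le> rinner a0 x"
  shows "Im (cdot a0 x) = 0"
proof (cases "cdot a0 x = 0")
  case False
  define w where "w = cdot a0 x"
  define c where "c = cnj w / cmod w"
  have "cmod c = 1" using False by (simp add: c_def w_def norm_divide)
  have "c * w = of_real (cmod w)"
  proof -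
    have "c * w = of_real ((cmod w)\<^sup>2) / of_real (cmod w)"
      by (simp add: c_def complex_norm_square mult.commute del: of_real_power)
    then show ?thesis using False by (simp add: w_def power2_eq_square)
  qed
  then have "rinner a0 (\<chi> k. c * x $ k) = cmod w"
    by (simp add: rinner_def cdot_scale_right flip: w_def)
  with assms [OF \<open>cmod c = 1\<close>] have "cmod w \<le> Re w"
    by (simp add: rinner_def w_def)
  then show ?thesis unfolding w_def by (rule Im_eq_0_if_cmod_le_Re)
qed simp

lemma rinner_rank_one_le_if_perturbed_feasible:
  assumes "(cmod (cdot a (x + h)))\<^sup>2 \<le> (cmod (cdot a x))\<^sup>2 + t"
  shows "rinner (\<chi> k. cdot a x * a $ k) h \<le> t / 2"
proof -
  have "cdot a (x + h) = cdot a x + cdot a h"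
    unfolding cdot_def by (simp add: distrib_left sum.distrib)
  then have "(cmod (cdot a x))\<^sup>2 + 2 * Re (cnj (cdot a x) * cdot a h) + (cmod (cdot a h))\<^sup>2
      \<le> (cmod (cdot a x))\<^sup>2 + t"
    using assms by (simp only: cmod_add_power2)
  then have "2 * Re (cnj (cdot a x) * cdot a h) \<le> t"
    using zero_le_power2 [of "cmod (cdot a h)"] by linarith
  then show ?thesis by (simp add: rinner_def cdot_scale_left)
qed

lemma R_delta_memberI:
  assumes "0 \<le> \<delta>" and "0 < r" and xs_real: "cdot a0 xs = of_real r"
    and "\<delta> * norm a0 \<le> r"
    and "Im (cdot a0 h) = 0"
  shows "h \<in> R_delta \<delta> xs"
proof -
  define z where "z = h - (\<chi> k. cdot xs h * xs $ k)"
  have "r * \<bar>Im (cdot xs h)\<bar> = \<bar>Im (cdot a0 z)\<bar>"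
    using assms(2,5)
    by (simp add: z_def cdot_diff_right cdot_scale_right xs_real abs_mult)
  also have "\<dots> \<le> norm a0 * norm z"
    using abs_Im_le_cmod norm_cdot_le order.trans by blast
  finally have "\<delta> * (r * \<bar>Im (cdot xs h)\<bar>) \<le> (\<delta> * norm a0) * norm z"
    using assms(1) by (simp add: mult_left_mono mult.assoc)
  also have "\<dots> \<le> r * norm z"
    using assms(4) by (simp add: mult_right_mono)
  finally have "r * (\<delta> * \<bar>Im (cdot xs h)\<bar>) \<le> r * norm z"
    by (simp add: algebra_simps)
  then show ?thesis
    using \<open>0 < r\<close> by (simp add: R_delta_def z_def)
qed

theorem lemma1:
  fixes M :: nat and \<delta> \<eta> \<epsilon> :: real
    and xs a0 :: "complex ^ 'n" and a :: "nat \<Rightarrow> complex ^ 'n"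
    and \<xi> b :: "nat \<Rightarrow> real" and xhat :: "complex ^ 'n"
  assumes "M \<ge> 1"
    and "0 < \<delta>" "\<delta> < 1" "\<eta> > 0" "\<epsilon> \<ge> 0"
    and "norm xs = 1"
    and "\<And>i. i \<in> {1..M} \<Longrightarrow> b i = (cmod (cdot (a i) xs))\<^sup>2 + \<xi> i"
    and "\<And>i. i \<in> {1..M} \<Longrightarrow> \<xi> i \<in> {0..1 / \<eta>}"
    and "a0 \<noteq> 0"
    and "cdot a0 xs \<in> \<real>" "Re (cdot a0 xs) > 0"
    and "cmod (cdot a0 xs) \<ge> \<delta> * norm a0 * norm xs"
    and "\<And>h. h \<in> R_delta \<delta> xs \<Longrightarrow> norm h > \<epsilon> \<Longrightarrow>
           \<not> (rinner a0 h \<ge> 0 \<and>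
              (\<forall>i\<in>{1..M}. rinner (\<chi> k. cdot (a i) xs * a i $ k) h \<le> 1 / 2 * (1 / \<eta>)))"
    and "\<forall>i\<in>{1..M}. (cmod (cdot (a i) xhat))\<^sup>2 \<le> b i"
    and "\<forall>x. (\<forall>i\<in>{1..M}. (cmod (cdot (a i) x))\<^sup>2 \<le> b i) \<longrightarrow> rinner a0 x \<le> rinner a0 xhat"
  shows "norm (xhat - xs) \<le> \<epsilon>"
proof -
  define h where "h = xhat - xs"
  have feasible: "(cmod (cdot (a i) x))\<^sup>2 \<le> b i \<longleftrightarrow>
      (cmod (cdot (a i) x))\<^sup>2 \<le> (cmod (cdot (a i) xs))\<^sup>2 + \<xi> i" if "i \<in> {1..M}" for i x
    using assms(7) that by simp
  have "rinner a0 h \<ge> 0"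
    using assms(8,15) feasible by (force simp: h_def rinner_diff_right)
  moreover have "rinner (\<chi> k. cdot (a i) xs * a i $ k) h \<le> 1 / 2 * (1 / \<eta>)"
    if "i \<in> {1..M}" for i
  proof -
    have "rinner (\<chi> k. cdot (a i) xs * a i $ k) h \<le> \<xi> i / 2"
      using assms(14) feasible that
      by (intro rinner_rank_one_le_if_perturbed_feasible) (simp add: h_def)
    then show ?thesis using assms(8) [OF that] by simp
  qed
  moreover have "h \<in> R_delta \<delta> xs"
  proof (rule R_delta_memberI)
    show "cdot a0 xs = of_real (Re (cdot a0 xs))"
      using assms(10) by (simp add: complex_is_Real_iff complex_eq_iff)
    have "Im (cdot a0 xhat) = 0"
      using assms(14,15)
      by (intro Im_cdot_eq_0_if_phase_optimal) (simp add: cdot_scale_right norm_mult)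
    then show "Im (cdot a0 h) = 0"
      using assms(10) by (simp add: h_def cdot_diff_right complex_is_Real_iff)
    show "\<delta> * norm a0 \<le> Re (cdot a0 xs)"
      using assms(6,10,11,12) by (simp add: complex_is_Real_iff cmod_eq_Re)
  qed (use assms(2,11) in auto)
  ultimately have "\<not> norm h > \<epsilon>"
    using assms(13) by blast
  then show ?thesis by (simp add: h_def)
qed

end
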